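(* Let $A\in\mathbb{R}^{d\times d}$ be symmetric positive definite and $p\ge1$. Let $(M,N)$, $E_p$, the process ${\mathbf z}^k$, ${\mathbf x}^k=E_p^\top{\mathbf z}^k$, $C_i$ and $\bar N$ be as follows: $N$ is a random $d\times d$ matrix, $M$ is a random $pd\times pd$ block companion matrix (block rows $i=1,\dots,p-1$ have $I_d$ in block column $i+1$, last block row random $(C^{\mathrm r}_0,\dots,C^{\mathrm r}_{p-1})$), $E_p=(0_d,\dots,0_d,I_d)^\top$, ${\mathbf z}^0=E_p{\mathbf x}^0$, ${\mathbf z}^k=M^{(k)}{\mathbf z}^{k-1}+E_pN^{(k)}{\mathbf b}$ with $(M^{(k)},N^{(k)})$ i.i.d. copies of $(M,N)$, $C_i=\mathbb{E}[C_i^{\mathrm r}]$, $\bar N=\mathbb{E}[N]$. Assume $\rho(\mathbb{E}[M])<1$, that $\mathbb{E}[{\mathbf x}^k]\to-A^{-1}{\mathbf b}$ for every ${\mathbf b}$ and every ${\mathbf x}^0$, and that there is an invertible $Q\in\mathbb{R}^{d\times d}$ with each $Q^{-1}C_iQ$ upper triangular. Then there exist monic polynomials $s_1,\dots,s_d$ of degree $p$ such that $$\det(\mathbb{E}[M]-\lambda I_{pd})=(-1)^{pd}\prod_{j=1}^d s_j(\lambda)\quad\text{and}\quad \operatorname{spec}(-\bar NA)=\{s_1(1),\dots,s_d(1)\}.$$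
   Context: $\rho$ denotes spectral radius and $\operatorname{spec}$ the set of eigenvalues. This setting is what the paper calls a $p$-CLI optimization algorithm applied to the quadratic $f({\mathbf x})=\tfrac12{\mathbf x}^\top A{\mathbf x}+{\mathbf b}^\top{\mathbf x}$. *)

theory Defs
  imports "HOL-Probability.Probability" "Jordan_Normal_Form.Spectral_Radius"
    "Jordan_Normal_Form.Gauss_Jordan_Elimination"
begin

definition blk_companion :: "nat \<Rightarrow> nat \<Rightarrow> (nat \<Rightarrow> real mat) \<Rightarrow> real mat" where
  "blk_companion d p C = mat (p*d) (p*d) (\<lambda>(r,c).
     if r < (p-1)*d then (if c = r + d then 1 else 0)
     else C (c div d) $$ (r - (p-1)*d, c mod d))"

definition Ep :: "nat \<Rightarrow> nat \<Rightarrow> real mat" where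
  "Ep d p = mat (p*d) d (\<lambda>(r,c). if r = (p-1)*d + c then 1 else 0)"

primrec zproc :: "nat \<Rightarrow> nat \<Rightarrow> (nat \<Rightarrow> nat \<Rightarrow> 'w \<Rightarrow> real mat) \<Rightarrow> (nat \<Rightarrow> 'w \<Rightarrow> real mat)
    \<Rightarrow> real vec \<Rightarrow> real vec \<Rightarrow> nat \<Rightarrow> 'w \<Rightarrow> real vec" where
  "zproc d p Cr Nr b x0 0 \<omega> = Ep d p *\<^sub>v x0"
| "zproc d p Cr Nr b x0 (Suc k) \<omega> =
     blk_companion d p (\<lambda>i. Cr (Suc k) i \<omega>) *\<^sub>v zproc d p Cr Nr b x0 k \<omega>
     + Ep d p *\<^sub>v (Nr (Suc k) \<omega> *\<^sub>v b)"

definition mean_mat :: "'w measure \<Rightarrow> nat \<Rightarrow> nat \<Rightarrow> ('w \<Rightarrow> real mat) \<Rightarrow> real mat" where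
  "mean_mat P n m X = mat n m (\<lambda>(a,b). LINT \<omega>|P. X \<omega> $$ (a,b))"

text \<open>All random entries of the k-th copy (C^r_0,...,C^r_{p-1}, N), packed as one
  random element of a product space (entries outside the index ranges set to 0).\<close>
definition copy_data :: "nat \<Rightarrow> nat \<Rightarrow> (nat \<Rightarrow> 'w \<Rightarrow> real mat) \<Rightarrow> ('w \<Rightarrow> real mat)
    \<Rightarrow> 'w \<Rightarrow> (nat option \<times> nat \<times> nat \<Rightarrow> real)" where
  "copy_data d p C N \<omega> = (\<lambda>(oi,a,b). if a < d \<and> b < d then
      (case oi of Some i \<Rightarrow> if i < p then C i \<omega> $$ (a,b) else 0 | None \<Rightarrow> N \<omega> $$ (a,b)) else 0)"

definition data_space :: "(nat option \<times> nat \<times> nat \<Rightarrow> real) measure" where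
  "data_space = PiM UNIV (\<lambda>_. borel)"

definition sym_pos_def :: "nat \<Rightarrow> real mat \<Rightarrow> bool" where
  "sym_pos_def d A \<longleftrightarrow> A \<in> carrier_mat d d \<and> transpose_mat A = A \<and>
     (\<forall>v \<in> carrier_vec d. v \<noteq> 0\<^sub>v d \<longrightarrow> v \<bullet> (A *\<^sub>v v) > 0)"

end

theory Submission
  imports Defs
begin

text \<open>Taking expectations in the recursion for z^k, independence of the k-th copy from z^(k-1)
  turns it into the linear recursion E z^k = E[M] E z^(k-1) + E_p Nbar b, whose first p-1 block rows
  are shifts. So if the last block converges to -A^(-1) b, all blocks do, and the last block row
  yields in the limit -Nbar A = I - (C_0 + ... + C_(p-1)).

  Multiplying E[M] - t I from the right by a block upper triangular matrix of determinant 1 shows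
  det (E[M] - t I) = (-1)^((p-1)d) det (sum_i t^i C_i - t^p I) for t \<noteq> 0, and both sides are
  polynomials in t. Conjugation by Q makes sum_i t^i C_i - t^p I upper triangular with diagonal
  entries -s_j(t), where s_j(t) = t^p - sum_i (Q^(-1) C_i Q)_jj t^i; likewise -Nbar A is similar
  to an upper triangular matrix with diagonal entries s_j(1).\<close>

lemma sum_lessThan_mult_blocks:
  fixes f :: "nat \<Rightarrow> 'a::comm_monoid_add"
  shows "(\<Sum>k<p*d. f k) = (\<Sum>i<p. \<Sum>b<d. f (i*d + b))"
proof -
  have "(\<Sum>b<d. f (i*d + b)) = (\<Sum>k\<in>{i*d..<i*d+d}. f k)" for i
    using sum.shift_bounds_nat_ivl[of f 0 "i*d" d] by (simp add: atLeast0LessThan add.commute)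
  then show ?thesis by (simp add: sum.nat_group)
qed

lemma index_mult_mat_sum:
  "A \<in> carrier_mat n m \<Longrightarrow> B \<in> carrier_mat m l \<Longrightarrow> i < n \<Longrightarrow> j < l \<Longrightarrow>
   (A * B) $$ (i,j) = (\<Sum>k<m. A $$ (i,k) * B $$ (k,j))"
  by (auto simp: scalar_prod_def atLeast0LessThan intro!: sum.cong)

lemma index_mult_mat_vec_sum:
  "A \<in> carrier_mat n m \<Longrightarrow> v \<in> carrier_vec m \<Longrightarrow> i < n \<Longrightarrow>
   (A *\<^sub>v v) $ i = (\<Sum>k<m. A $$ (i,k) * v $ k)"
  by (auto simp: scalar_prod_def atLeast0LessThan intro!: sum.cong)

lemma mat_eq_if_mult_vec_eq:
  fixes A B :: "'a::semiring_1 mat"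
  assumes "A \<in> carrier_mat n m" "B \<in> carrier_mat n m"
    and "\<And>v. v \<in> carrier_vec m \<Longrightarrow> A *\<^sub>v v = B *\<^sub>v v"
  shows "A = B"
proof (rule mat_col_eqI)
  fix j assume "j < dim_col B"
  have "col A j = A *\<^sub>v unit_vec m j" "col B j = B *\<^sub>v unit_vec m j"
    using assms(1,2) \<open>j < dim_col B\<close> col_mult2[of _ n m "1\<^sub>m m" m j] by auto
  then show "col A j = col B j" using assms(3) by simp
qed (use assms in auto)

section \<open>Block companion matrices\<close>

lemma blk_companion_carrier[simp]: "blk_companion d p C \<in> carrier_mat (p*d) (p*d)"
  by (simp add: blk_companion_def)

lemma index_blk_companion:
  "r < p*d \<Longrightarrow> c < p*d \<Longrightarrow> blk_companion d p C $$ (r,c) =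
   (if r < (p-1)*d then (if c = r + d then 1 else 0)
    else C (c div d) $$ (r - (p-1)*d, c mod d))"
  by (simp add: blk_companion_def)

lemma Ep_carrier[simp]: "Ep d p \<in> carrier_mat (p*d) d"
  by (simp add: Ep_def)

lemma index_Ep_mult_vec:
  assumes w: "w \<in> carrier_vec d" and r: "r < p*d"
  shows "(Ep d p *\<^sub>v w) $ r = (if (p-1)*d \<le> r then w $ (r - (p-1)*d) else 0)"
proof -
  have "(Ep d p *\<^sub>v w) $ r = (\<Sum>c<d. if c = r - (p-1)*d \<and> (p-1)*d \<le> r then w $ c else 0)"
    using index_mult_mat_vec_sum[OF Ep_carrier w r] r by (auto simp: Ep_def intro!: sum.cong)
  also have "\<dots> = (if (p-1)*d \<le> r then w $ (r - (p-1)*d) else 0)"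
    using r by (cases p) auto
  finally show ?thesis .
qed

lemma index_transpose_Ep_mult_vec:
  assumes z: "z \<in> carrier_vec (p*d)" and a: "a < d" and p: "p \<ge> 1"
  shows "(transpose_mat (Ep d p) *\<^sub>v z) $ a = z $ ((p-1)*d + a)"
proof -
  have "(transpose_mat (Ep d p) *\<^sub>v z) $ a = (\<Sum>r<p*d. transpose_mat (Ep d p) $$ (a,r) * z $ r)"
    by (rule index_mult_mat_vec_sum[OF _ z a]) simp
  also have "\<dots> = (\<Sum>r<p*d. if r = (p-1)*d + a then z $ r else 0)"
    using a by (intro sum.cong) (auto simp: Ep_def)
  also have "\<dots> = z $ ((p-1)*d + a)"
    using a p by (cases p) auto
  finally show ?thesis .
qed

primrec matpoly_eval :: "nat \<Rightarrow> nat \<Rightarrow> (nat \<Rightarrow> 'a::comm_ring_1 mat) \<Rightarrow> 'a \<Rightarrow> 'a mat" where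
  "matpoly_eval d 0 X t = 0\<^sub>m d d"
| "matpoly_eval d (Suc n) X t = matpoly_eval d n X t + t^n \<cdot>\<^sub>m X n"

lemma matpoly_eval_carrier:
  "(\<And>i. i < n \<Longrightarrow> X i \<in> carrier_mat d d) \<Longrightarrow> matpoly_eval d n X t \<in> carrier_mat d d"
  by (induction n) auto

lemma index_matpoly_eval:
  assumes "\<And>i. i < n \<Longrightarrow> X i \<in> carrier_mat d d" and "a < d" "b < d"
  shows "matpoly_eval d n X t $$ (a,b) = (\<Sum>i<n. X i $$ (a,b) * t^i)"
  using assms
proof (induction n)
  case (Suc n)
  then have "matpoly_eval d n X t \<in> carrier_mat d d" "dim_row (X n) = d" "dim_col (X n) = d"
    by (auto intro: matpoly_eval_carrier)
  with Suc show ?case by (simp add: mult.commute)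
qed simp

lemma matpoly_eval_cong:
  "(\<And>i. i < n \<Longrightarrow> X i = Y i) \<Longrightarrow> matpoly_eval d n X t = matpoly_eval d n Y t"
  by (induction n) auto

lemma matpoly_eval_conj:
  assumes Q: "Q \<in> carrier_mat d d" and Qi: "Qi \<in> carrier_mat d d"
    and X: "\<And>i. i < n \<Longrightarrow> X i \<in> carrier_mat d d"
  shows "matpoly_eval d n (\<lambda>i. Q * X i * Qi) t = Q * matpoly_eval d n X t * Qi"
  using X
proof (induction n)
  case 0
  then show ?case using Q Qi by simp
next
  case (Suc n)
  have L: "matpoly_eval d n X t \<in> carrier_mat d d" and Xn: "X n \<in> carrier_mat d d"
    using Suc.prems by (auto intro: matpoly_eval_carrier)
  have "Q * (matpoly_eval d n X t + t^n \<cdot>\<^sub>m X n) * Qi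
      = Q * matpoly_eval d n X t * Qi + Q * (t^n \<cdot>\<^sub>m X n) * Qi"
    using Q Qi L Xn by (simp add: mult_add_distrib_mat[of Q d d] add_mult_distrib_mat[of _ d d _ Qi d])
  also have "Q * (t^n \<cdot>\<^sub>m X n) * Qi = t^n \<cdot>\<^sub>m (Q * X n * Qi)"
    using Q Qi Xn by (simp add: mult_smult_distrib[of Q d d] mult_smult_assoc_mat[of _ d d Qi d])
  finally show ?case using Suc by simp
qed

lemma sum_blk_row_eq_matpoly_eval_one_mult_vec:
  assumes C: "\<And>i. i < p \<Longrightarrow> C i \<in> carrier_mat d d" and w: "w \<in> carrier_vec d" and a: "a < d"
  shows "(\<Sum>c<p*d. C (c div d) $$ (a, c mod d) * w $ (c mod d)) = (matpoly_eval d p C 1 *\<^sub>v w) $ a"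
proof -
  have "(\<Sum>c<p*d. C (c div d) $$ (a, c mod d) * w $ (c mod d))
      = (\<Sum>i<p. \<Sum>b<d. C i $$ (a, b) * w $ b)"
    unfolding sum_lessThan_mult_blocks by (intro sum.cong) auto
  also have "\<dots> = (\<Sum>b<d. matpoly_eval d p C 1 $$ (a,b) * w $ b)"
    using C a by (simp add: index_matpoly_eval sum_distrib_right sum.swap[of _ "{..<p}"])
  also have "\<dots> = (matpoly_eval d p C 1 *\<^sub>v w) $ a"
    using index_mult_mat_vec_sum[OF matpoly_eval_carrier[OF C] w a] by simp
  finally show ?thesis .
qed

lemma le_if_mod_eq_div_le: "(k::nat) mod d = c mod d \<Longrightarrow> k div d \<le> c div d \<Longrightarrow> k \<le> c"
  by (metis add_le_cancel_right div_mult_mod_eq mult_le_mono1)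

text \<open>Multiplying M - t I from the right by it, for M a block companion matrix, leaves -t I in the first
  p-1 block rows and t^(1-p) (sum_i t^i C_i - t^p I) in the last diagonal block.\<close>
definition blk_elim :: "nat \<Rightarrow> nat \<Rightarrow> 'a::field \<Rightarrow> 'a mat" where
  "blk_elim d p t = mat (p*d) (p*d) (\<lambda>(k,c).
     if k mod d = c mod d \<and> k div d \<le> c div d then (1/t)^(c div d - k div d) else 0)"

lemma blk_elim_carrier[simp]: "blk_elim d p t \<in> carrier_mat (p*d) (p*d)"
  by (simp add: blk_elim_def)

lemma det_blk_elim: "det (blk_elim d p t) = 1"
proof -
  have "upper_triangular (blk_elim d p t)"
    unfolding upper_triangular_def blk_elim_def using le_if_mod_eq_div_le by fastforce
  then have "det (blk_elim d p t) = prod_list (diag_mat (blk_elim d p t))"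
    by (rule det_upper_triangular[OF _ blk_elim_carrier])
  also have "diag_mat (blk_elim d p t) = map (\<lambda>_. 1) [0..<p*d]"
    unfolding diag_mat_def blk_elim_def by simp
  finally show ?thesis by (simp add: map_replicate_const)
qed

lemma index_blk_elim_step:
  fixes t :: "'a::field"
  assumes t: "t \<noteq> 0" and r: "r + d < p*d" and c: "c < p*d"
  shows "blk_elim d p t $$ (r+d, c) - t * blk_elim d p t $$ (r,c) = (if r = c then -t else 0)"
proof -
  have "d > 0" using r by (cases d) auto
  then have m: "(r+d) mod d = r mod d" "(r+d) div d = Suc (r div d)" by auto
  have rc: "r < p*d" using r by simp
  show ?thesis
  proof (cases "r mod d = c mod d \<and> Suc (r div d) \<le> c div d")
    case True
    then have "c div d - r div d = Suc (c div d - Suc (r div d))" by auto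
    then have "t * (1/t)^(c div d - r div d) = (1/t)^(c div d - Suc (r div d))" using t by simp
    moreover have "r \<noteq> c" using True by auto
    ultimately show ?thesis using True r c by (simp add: blk_elim_def m)
  next
    case False
    have "r = c" if "r mod d = c mod d" "r div d = c div d"
      using that by (metis div_mult_mod_eq)
    then show ?thesis using False r c by (auto simp: blk_elim_def m)
  qed
qed

lemma index_blk_companion_minus_mult_blk_elim_upper:
  fixes C :: "nat \<Rightarrow> real mat"
  assumes t: "t \<noteq> 0" and r: "r < (p-1)*d" and c: "c < p*d"
  shows "((blk_companion d p C - t \<cdot>\<^sub>m 1\<^sub>m (p*d)) * blk_elim d p t) $$ (r,c)
       = (if r = c then -t else 0)"
proof -
  let ?E = "blk_elim d p t"
  have rd: "r + d < p*d" using r by (cases p) auto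
  then have rn: "r < p*d" by simp
  have "((blk_companion d p C - t \<cdot>\<^sub>m 1\<^sub>m (p*d)) * ?E) $$ (r,c)
      = (\<Sum>k<p*d. (if k = r+d then ?E $$ (k,c) else 0) - (if k = r then t * ?E $$ (k,c) else 0))"
    using r rn c
    by (subst index_mult_mat_sum[of _ "p*d" "p*d"]) (auto simp: index_blk_companion intro!: sum.cong)
  also have "\<dots> = ?E $$ (r+d, c) - t * ?E $$ (r,c)"
    using rd rn by (simp add: sum_subtractf)
  also have "\<dots> = (if r = c then -t else 0)"
    by (rule index_blk_elim_step[OF t rd c])
  finally show ?thesis .
qed

lemma inverse_power_mult_power:
  fixes t :: "'a::field"
  assumes "t \<noteq> 0" "i \<le> n"
  shows "(1/t)^n * t^i = (1/t)^(n - i)"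
proof -
  have "(1/t)^n = (1/t)^(n-i) * (1/t)^i"
    using assms(2) by (simp flip: power_add)
  then show ?thesis using assms(1) by (simp add: power_one_over)
qed

lemma index_blk_elim_last_col:
  assumes i: "i < p" and a: "a < d" and b: "b < d"
  shows "blk_elim d p t $$ (i*d + a, (p-1)*d + b) = (if a = b then (1/t)^(p-1-i) else 0)"
proof -
  have "i*d + a < Suc i * d" using a by simp
  also have "\<dots> \<le> p*d" using i by (intro mult_le_mono1) simp
  finally have "i*d + a < p*d" .
  moreover have "(p-1)*d + b < p*d" using i b by (cases p) auto
  moreover have "i \<le> p - 1" using i by simp
  ultimately show ?thesis using a b by (simp add: blk_elim_def)
qed

lemma index_blk_companion_minus_mult_blk_elim_last:
  fixes C :: "nat \<Rightarrow> real mat"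
  assumes C: "\<And>i. i < p \<Longrightarrow> C i \<in> carrier_mat d d" and p: "p \<ge> 1" and t: "t \<noteq> 0"
    and a: "a < d" and b: "b < d"
  shows "((blk_companion d p C - t \<cdot>\<^sub>m 1\<^sub>m (p*d)) * blk_elim d p t) $$ ((p-1)*d + a, (p-1)*d + b)
       = ((1/t)^(p-1) \<cdot>\<^sub>m (matpoly_eval d p C t - t^p \<cdot>\<^sub>m 1\<^sub>m d)) $$ (a,b)"
proof -
  let ?E = "blk_elim d p t" and ?q = "(p-1)*d"
  have n: "?q + d = p*d" using p by (cases p) auto
  have "((blk_companion d p C - t \<cdot>\<^sub>m 1\<^sub>m (p*d)) * ?E) $$ (?q + a, ?q + b)
      = (\<Sum>k<p*d. C (k div d) $$ (a, k mod d) * ?E $$ (k, ?q + b)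
                 - (if k = ?q + a then t * ?E $$ (k, ?q + b) else 0))"
    using a b n
    by (subst index_mult_mat_sum[of _ "p*d" "p*d" _ "p*d"])
      (auto simp: index_blk_companion left_diff_distrib intro!: sum.cong)
  also have "\<dots> = (\<Sum>k<p*d. C (k div d) $$ (a, k mod d) * ?E $$ (k, ?q + b))
                 - t * ?E $$ (?q + a, ?q + b)"
    using a n by (simp add: sum_subtractf)
  also have "(\<Sum>k<p*d. C (k div d) $$ (a, k mod d) * ?E $$ (k, ?q + b))
      = (\<Sum>i<p. \<Sum>b'<d. C i $$ (a, b') * ?E $$ (i*d + b', ?q + b))"
    unfolding sum_lessThan_mult_blocks by (intro sum.cong) auto
  also have "(\<Sum>i<p. \<Sum>b'<d. C i $$ (a, b') * ?E $$ (i*d + b', ?q + b))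
      = (\<Sum>i<p. C i $$ (a, b) * (1/t)^(p-1-i))"
  proof (intro sum.cong refl)
    fix i assume "i \<in> {..<p}"
    then have "C i $$ (a, b') * ?E $$ (i*d + b', ?q + b) = (if b' = b then C i $$ (a, b) * (1/t)^(p-1-i) else 0)"
      if "b' < d" for b'
      using index_blk_elim_last_col[of i p b' d b t] that b by simp
    then have "(\<Sum>b'<d. C i $$ (a, b') * ?E $$ (i*d + b', ?q + b))
        = (\<Sum>b'<d. if b' = b then C i $$ (a, b) * (1/t)^(p-1-i) else 0)"
      by (intro sum.cong refl) auto
    then show "(\<Sum>b'<d. C i $$ (a, b') * ?E $$ (i*d + b', ?q + b)) = C i $$ (a, b) * (1/t)^(p-1-i)"
      using b by simp
  qed
  also have "\<dots> = (1/t)^(p-1) * (\<Sum>i<p. C i $$ (a, b) * t^i)"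
    using t by (simp add: sum_distrib_left inverse_power_mult_power mult.left_commute)
  also have "t * ?E $$ (?q + a, ?q + b) = (1/t)^(p-1) * (if a = b then t^p else 0)"
    using index_blk_elim_last_col[of "p-1" p a d b t] a b t p by (cases p) (simp_all add: power_one_over)
  finally show ?thesis
    using C a b matpoly_eval_carrier[OF C]
    by (simp add: index_matpoly_eval right_diff_distrib)
qed

lemma blk_companion_minus_mult_blk_elim:
  fixes C :: "nat \<Rightarrow> real mat"
  assumes C: "\<And>i. i < p \<Longrightarrow> C i \<in> carrier_mat d d" and p: "p \<ge> 1" and t: "t \<noteq> 0"
  obtains W where "W \<in> carrier_mat d ((p-1)*d)"
    and "(blk_companion d p C - t \<cdot>\<^sub>m 1\<^sub>m (p*d)) * blk_elim d p t
       = four_block_mat ((-t) \<cdot>\<^sub>m 1\<^sub>m ((p-1)*d)) (0\<^sub>m ((p-1)*d) d)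
           W ((1/t)^(p-1) \<cdot>\<^sub>m (matpoly_eval d p C t - t^p \<cdot>\<^sub>m 1\<^sub>m d))"
proof
  let ?KE = "(blk_companion d p C - t \<cdot>\<^sub>m 1\<^sub>m (p*d)) * blk_elim d p t" and ?q = "(p-1)*d"
    and ?D = "(1/t)^(p-1) \<cdot>\<^sub>m (matpoly_eval d p C t - t^p \<cdot>\<^sub>m 1\<^sub>m d)"
  define W where "W = mat d ?q (\<lambda>(a,c). ?KE $$ (?q + a, c))"
  show "W \<in> carrier_mat d ?q" by (simp add: W_def)
  have n: "p*d = ?q + d" using p by (cases p) auto
  have D: "?D \<in> carrier_mat d d" using matpoly_eval_carrier[OF C] by auto
  show "?KE = four_block_mat ((-t) \<cdot>\<^sub>m 1\<^sub>m ?q) (0\<^sub>m ?q d) W ?D" (is "_ = ?F")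
  proof (rule eq_matI)
    fix r c assume "r < dim_row ?F" and "c < dim_col ?F"
    then have r: "r < ?q + d" and c: "c < ?q + d" using D by auto
    show "?KE $$ (r,c) = ?F $$ (r,c)"
    proof (cases "r < ?q")
      case True
      then show ?thesis
        using r c n D index_blk_companion_minus_mult_blk_elim_upper[OF t True, of c C] by auto
    next
      case False
      then obtain a where a: "r = ?q + a" "a < d" using r by (metis add_less_cancel_left le_Suc_ex not_le)
      show ?thesis
      proof (cases "c < ?q")
        case True
        then show ?thesis using a D by (simp add: W_def)
      next
        case False
        then obtain b where b: "c = ?q + b" "b < d" using c by (metis add_less_cancel_left le_Suc_ex not_le)
        then show ?thesis
          using index_blk_companion_minus_mult_blk_elim_last[OF C p t a(2) b(2)] a D by simp
      qed
    qed
  qed (use D n in \<open>auto simp: blk_elim_def\<close>)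
qed

lemma det_blk_companion_minus:
  fixes C :: "nat \<Rightarrow> real mat"
  assumes C: "\<And>i. i < p \<Longrightarrow> C i \<in> carrier_mat d d" and p: "p \<ge> 1" and t: "t \<noteq> 0"
  shows "det (blk_companion d p C - t \<cdot>\<^sub>m 1\<^sub>m (p*d))
       = (-1)^((p-1)*d) * det (matpoly_eval d p C t - t^p \<cdot>\<^sub>m 1\<^sub>m d)"
proof -
  let ?K = "blk_companion d p C - t \<cdot>\<^sub>m 1\<^sub>m (p*d)" and ?q = "(p-1)*d"
    and ?L = "matpoly_eval d p C t - t^p \<cdot>\<^sub>m 1\<^sub>m d"
  obtain W where W: "W \<in> carrier_mat d ?q"
    and KE: "?K * blk_elim d p t = four_block_mat ((-t) \<cdot>\<^sub>m 1\<^sub>m ?q) (0\<^sub>m ?q d) W ((1/t)^(p-1) \<cdot>\<^sub>m ?L)"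
    using blk_companion_minus_mult_blk_elim[where C = C, OF C p t] by blast
  have L: "?L \<in> carrier_mat d d" using matpoly_eval_carrier[OF C] by auto
  have K: "?K \<in> carrier_mat (p*d) (p*d)" by (intro minus_carrier_mat) auto
  have "det ?K = det (?K * blk_elim d p t)"
    by (simp add: det_mult[OF K blk_elim_carrier] det_blk_elim)
  also have "\<dots> = (-t)^?q * ((1/t)^(p-1))^d * det ?L"
    unfolding KE using W L by (subst det_four_block_mat_upper_right_zero[of _ ?q _ d]) auto
  also have "(-t)^?q * ((1/t)^(p-1))^d = (-1)^?q"
    using t by (simp add: power_mult[symmetric] power_minus[of t] power_one_over)
  finally show ?thesis .
qed

section \<open>Simultaneously triangularisable coefficients\<close>

lemma conj_minus_mat:
  fixes Q :: "'a::comm_ring_1 mat"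
  assumes "Q \<in> carrier_mat n n" "Qi \<in> carrier_mat n n" "A \<in> carrier_mat n n" "B \<in> carrier_mat n n"
  shows "Q * (A - B) * Qi = Q * A * Qi - Q * B * Qi"
  using assms by (simp add: mult_minus_distrib_mat[of Q n n] minus_mult_distrib_mat[of _ n n _ Qi n])

lemma conj_smult_one_mat:
  fixes Q :: "'a::comm_ring_1 mat"
  assumes "Q \<in> carrier_mat n n" "Qi \<in> carrier_mat n n" "Q * Qi = 1\<^sub>m n"
  shows "Q * (s \<cdot>\<^sub>m 1\<^sub>m n) * Qi = s \<cdot>\<^sub>m 1\<^sub>m n"
proof -
  have "Q * (s \<cdot>\<^sub>m 1\<^sub>m n) = s \<cdot>\<^sub>m (Q * 1\<^sub>m n)"
    using assms(1) by (intro mult_smult_distrib) auto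
  then show ?thesis
    using assms by (simp add: mult_smult_assoc_mat[of Q n n Qi n])
qed

lemma det_conj_mat:
  fixes Q :: "'a::comm_ring_1 mat"
  assumes "Q \<in> carrier_mat n n" "Qi \<in> carrier_mat n n" "Q * Qi = 1\<^sub>m n" "Z \<in> carrier_mat n n"
  shows "det (Q * Z * Qi) = det Z"
proof -
  have "det (Q * Z * Qi) = (det Q * det Qi) * det Z"
    using assms by (simp add: det_mult[of _ n] ac_simps)
  also have "det Q * det Qi = 1" using det_mult[of Q n Qi] assms by simp
  finally show ?thesis by simp
qed

definition diag_poly :: "nat \<Rightarrow> (nat \<Rightarrow> 'a::comm_ring_1 mat) \<Rightarrow> nat \<Rightarrow> 'a poly" where
  "diag_poly p T j = monom 1 p - (\<Sum>i<p. monom (T i $$ (j,j)) i)"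

lemma poly_diag_poly: "poly (diag_poly p T j) t = t^p - (\<Sum>i<p. T i $$ (j,j) * t^i)"
  by (simp add: diag_poly_def poly_sum poly_monom)

lemma degree_diag_poly:
  assumes "p \<ge> 1"
  shows "degree (diag_poly p T j) = p" and "lead_coeff (diag_poly p T j) = 1"
proof -
  have "degree (\<Sum>i<p. monom (T i $$ (j,j)) i) \<le> p - 1"
    by (rule degree_sum_le) (auto intro: order.trans[OF degree_monom_le])
  then have low: "degree (\<Sum>i<p. monom (T i $$ (j,j)) i) < p" using assms by linarith
  then show "degree (diag_poly p T j) = p"
    unfolding diag_poly_def diff_conv_add_uminus
    by (subst degree_add_eq_left) (auto simp: degree_monom_eq)
  then show "lead_coeff (diag_poly p T j) = 1"
    using low by (simp add: diag_poly_def coeff_eq_0)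
qed

lemma upper_triangular_add_mat:
  fixes A B :: "'a::monoid_add mat"
  shows "A \<in> carrier_mat n n \<Longrightarrow> B \<in> carrier_mat n n \<Longrightarrow> upper_triangular A \<Longrightarrow> upper_triangular B
   \<Longrightarrow> upper_triangular (A + B)"
  by (auto simp: upper_triangular_def)

lemma upper_triangular_minus_mat:
  fixes A B :: "'a::group_add mat"
  shows "A \<in> carrier_mat n n \<Longrightarrow> B \<in> carrier_mat n n \<Longrightarrow> upper_triangular A \<Longrightarrow> upper_triangular B
   \<Longrightarrow> upper_triangular (A - B)"
  by (auto simp: upper_triangular_def)

lemma upper_triangular_smult_mat:
  fixes A :: "'a::mult_zero mat"
  shows "A \<in> carrier_mat n n \<Longrightarrow> upper_triangular A \<Longrightarrow> upper_triangular (s \<cdot>\<^sub>m A)"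
  by (auto simp: upper_triangular_def)

lemma upper_triangular_matpoly_eval:
  assumes "\<And>i. i < n \<Longrightarrow> T i \<in> carrier_mat d d" and "\<And>i. i < n \<Longrightarrow> upper_triangular (T i)"
  shows "upper_triangular (matpoly_eval d n T t)"
  using assms
  by (induction n) (auto intro!: upper_triangular_add_mat upper_triangular_smult_mat matpoly_eval_carrier)

lemma det_matpoly_eval_minus_upper_triangular:
  fixes T :: "nat \<Rightarrow> 'a::comm_ring_1 mat"
  assumes T: "\<And>i. i < p \<Longrightarrow> T i \<in> carrier_mat d d" and ut: "\<And>i. i < p \<Longrightarrow> upper_triangular (T i)"
  shows "det (matpoly_eval d p T t - t^p \<cdot>\<^sub>m 1\<^sub>m d) = (-1)^d * (\<Prod>j<d. poly (diag_poly p T j) t)"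
proof -
  let ?Y = "matpoly_eval d p T t - t^p \<cdot>\<^sub>m 1\<^sub>m d"
  have Y: "?Y \<in> carrier_mat d d" using matpoly_eval_carrier[OF T] by auto
  have "upper_triangular ?Y"
    using matpoly_eval_carrier[OF T]
    by (intro upper_triangular_minus_mat upper_triangular_matpoly_eval upper_triangular_smult_mat T ut)
      auto
  then have "det ?Y = prod_list (diag_mat ?Y)" by (rule det_upper_triangular[OF _ Y])
  also have "\<dots> = (\<Prod>j<d. (-1) * poly (diag_poly p T j) t)"
    using Y by (simp add: diag_mat_def prod.distinct_set_conv_list[symmetric] atLeast0LessThan
        index_matpoly_eval[OF T] poly_diag_poly)
  also have "\<dots> = (-1)^d * (\<Prod>j<d. poly (diag_poly p T j) t)"
    by (subst prod.distrib) simp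
  finally show ?thesis .
qed

lemma det_minus_smult_one_eq_poly:
  fixes M :: "real mat" and f :: "real poly"
  assumes M: "M \<in> carrier_mat n n"
    and nonzero: "\<And>t. t \<noteq> 0 \<Longrightarrow> det (M - t \<cdot>\<^sub>m 1\<^sub>m n) = poly f t"
  shows "det (M - t \<cdot>\<^sub>m 1\<^sub>m n) = poly f t"
proof -
  have char: "det (M - t \<cdot>\<^sub>m 1\<^sub>m n) = poly (Polynomial.smult ((-1)^n) (char_poly M)) t" for t
  proof -
    have "- char_matrix M t = (-1) \<cdot>\<^sub>m (M - t \<cdot>\<^sub>m 1\<^sub>m n)"
      using M unfolding char_matrix_def by (intro eq_matI) auto
    then have "poly (char_poly M) t = (-1)^n * det (M - t \<cdot>\<^sub>m 1\<^sub>m n)"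
      unfolding char_poly_matrix[OF M] using M by simp
    then show ?thesis by simp
  qed
  have "Polynomial.smult ((-1)^n) (char_poly M) = f"
  proof (rule ccontr)
    assume "Polynomial.smult ((-1)^n) (char_poly M) \<noteq> f"
    then have "finite {t. poly (Polynomial.smult ((-1)^n) (char_poly M) - f) t = 0}"
      by (intro poly_roots_finite) auto
    moreover have "- {0} \<subseteq> {t. poly (Polynomial.smult ((-1)^n) (char_poly M) - f) t = 0}"
      using nonzero char by auto
    ultimately have "finite (- {0::real})" by (rule finite_subset[rotated])
    then show False using infinite_UNIV_char_0[where 'a = real] by simp
  qed
  then show ?thesis using char by simp
qed

lemma spectrum_conj_upper_triangular:
  fixes U Q Qi :: "real mat"
  assumes U: "U \<in> carrier_mat d d" "upper_triangular U"
    and Q: "Q \<in> carrier_mat d d" and Qi: "Qi \<in> carrier_mat d d"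
    and QQi: "Q * Qi = 1\<^sub>m d" and QiQ: "Qi * Q = 1\<^sub>m d"
  shows "spectrum (map_mat complex_of_real (Q * U * Qi)) = {complex_of_real (U $$ (j,j)) | j. j < d}"
proof -
  let ?h = "map_mat complex_of_real"
  have sim: "similar_mat (?h (Q * U * Qi)) (?h U)"
  proof (rule similar_matI)
    show "{?h (Q * U * Qi), ?h U, ?h Q, ?h Qi} \<subseteq> carrier_mat d d" using Q Qi U by auto
    show "?h Q * ?h Qi = 1\<^sub>m d"
      using QQi of_real_hom.mat_hom_mult[OF Q Qi, symmetric] by (simp add: of_real_hom.mat_hom_one)
    show "?h Qi * ?h Q = 1\<^sub>m d"
      using QiQ of_real_hom.mat_hom_mult[OF Qi Q, symmetric] by (simp add: of_real_hom.mat_hom_one)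
    have "?h (Q * U * Qi) = ?h (Q * U) * ?h Qi"
      using Q U Qi by (intro of_real_hom.mat_hom_mult[of "Q * U" d d Qi d]) auto
    also have "?h (Q * U) = ?h Q * ?h U"
      using Q U by (intro of_real_hom.mat_hom_mult) auto
    finally show "?h (Q * U * Qi) = ?h Q * ?h U * ?h Qi" .
  qed
  have hU: "?h U \<in> carrier_mat d d" "upper_triangular (?h U)"
    using U unfolding upper_triangular_def by auto
  have hQUQi: "?h (Q * U * Qi) \<in> carrier_mat d d" using Q U Qi by simp
  have "spectrum (?h (Q * U * Qi)) = {k. poly (char_poly (?h U)) k = 0}"
    unfolding spectrum_root_char_poly[OF hQUQi] char_poly_similar[OF sim] ..
  also have "\<dots> = {complex_of_real (U $$ (j,j)) | j. j < d}"
    unfolding char_poly_upper_triangular[OF hU] poly_prod_list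
    using U by (auto simp: prod_list_zero_iff diag_mat_def)
  finally show ?thesis .
qed

lemma det_blk_companion_minus_triangularised:
  fixes C T :: "nat \<Rightarrow> real mat" and Q Qi :: "real mat"
  assumes T: "\<And>i. i < p \<Longrightarrow> T i \<in> carrier_mat d d" and ut: "\<And>i. i < p \<Longrightarrow> upper_triangular (T i)"
    and Q: "Q \<in> carrier_mat d d" and Qi: "Qi \<in> carrier_mat d d" and QQi: "Q * Qi = 1\<^sub>m d"
    and CT: "\<And>i. i < p \<Longrightarrow> C i = Q * T i * Qi" and p: "p \<ge> 1"
  shows "det (blk_companion d p C - t \<cdot>\<^sub>m 1\<^sub>m (p*d)) = (-1)^(p*d) * (\<Prod>j<d. poly (diag_poly p T j) t)"
proof -
  have C: "C i \<in> carrier_mat d d" if "i < p" for i using CT[OF that] T[OF that] Q Qi by simp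
  have TE: "matpoly_eval d p T t \<in> carrier_mat d d" for t
    by (rule matpoly_eval_carrier[OF T])
  have L: "matpoly_eval d p C t - t^p \<cdot>\<^sub>m 1\<^sub>m d = Q * (matpoly_eval d p T t - t^p \<cdot>\<^sub>m 1\<^sub>m d) * Qi" for t
    using TE CT matpoly_eval_conj[OF Q Qi T]
    by (simp add: conj_minus_mat[OF Q Qi] conj_smult_one_mat[OF Q Qi QQi] cong: matpoly_eval_cong)
  have "det (blk_companion d p C - t \<cdot>\<^sub>m 1\<^sub>m (p*d)) = (-1)^(p*d) * (\<Prod>j<d. poly (diag_poly p T j) t)"
    if "t \<noteq> 0" for t
  proof -
    have "matpoly_eval d p T t - t^p \<cdot>\<^sub>m 1\<^sub>m d \<in> carrier_mat d d" using TE by auto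
    then have "det (blk_companion d p C - t \<cdot>\<^sub>m 1\<^sub>m (p*d))
        = (-1)^((p-1)*d) * det (matpoly_eval d p T t - t^p \<cdot>\<^sub>m 1\<^sub>m d)"
      by (simp add: det_blk_companion_minus[OF C p that] L det_conj_mat[OF Q Qi QQi])
    also have "det (matpoly_eval d p T t - t^p \<cdot>\<^sub>m 1\<^sub>m d) = (-1)^d * (\<Prod>j<d. poly (diag_poly p T j) t)"
      by (rule det_matpoly_eval_minus_upper_triangular[OF T ut])
    finally show ?thesis using p by (cases p) (simp_all add: power_add)
  qed
  then show ?thesis
    using det_minus_smult_one_eq_poly[of _ "p*d" "Polynomial.smult ((-1)^(p*d)) (\<Prod>j<d. diag_poly p T j)"]
    by (simp add: poly_prod)
qed

lemma spectrum_one_minus_matpoly_eval_triangularised: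
  fixes C T :: "nat \<Rightarrow> real mat" and Q Qi :: "real mat"
  assumes T: "\<And>i. i < p \<Longrightarrow> T i \<in> carrier_mat d d" and ut: "\<And>i. i < p \<Longrightarrow> upper_triangular (T i)"
    and Q: "Q \<in> carrier_mat d d" and Qi: "Qi \<in> carrier_mat d d"
    and QQi: "Q * Qi = 1\<^sub>m d" and QiQ: "Qi * Q = 1\<^sub>m d"
    and CT: "\<And>i. i < p \<Longrightarrow> C i = Q * T i * Qi"
  shows "spectrum (map_mat complex_of_real (1\<^sub>m d - matpoly_eval d p C 1))
       = {complex_of_real (poly (diag_poly p T j) 1) | j. j < d}"
proof -
  let ?U = "1\<^sub>m d - matpoly_eval d p T 1"
  have TE: "matpoly_eval d p T 1 \<in> carrier_mat d d" by (rule matpoly_eval_carrier[OF T])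
  then have U: "?U \<in> carrier_mat d d" by auto
  have "Q * ?U * Qi = 1\<^sub>m d - matpoly_eval d p C 1"
    using TE Q CT matpoly_eval_conj[OF Q Qi T]
    by (simp add: conj_minus_mat[OF Q Qi] QQi cong: matpoly_eval_cong)
  moreover have "upper_triangular ?U"
    using TE by (intro upper_triangular_minus_mat upper_triangular_matpoly_eval T ut) auto
  ultimately have "spectrum (map_mat complex_of_real (1\<^sub>m d - matpoly_eval d p C 1))
      = {complex_of_real (?U $$ (j,j)) | j. j < d}"
    using spectrum_conj_upper_triangular[OF U _ Q Qi QQi QiQ] by simp
  also have "?U $$ (j,j) = poly (diag_poly p T j) 1" if "j < d" for j
    using that carrier_matD[OF TE] by (simp add: index_matpoly_eval[OF T] poly_diag_poly)
  then have "{complex_of_real (?U $$ (j,j)) | j. j < d} = {complex_of_real (poly (diag_poly p T j) 1) | j. j < d}"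
    by force
  finally show ?thesis .
qed

theorem blk_companion_triangularisable:
  fixes C :: "nat \<Rightarrow> real mat" and Q Qi :: "real mat"
  assumes C: "\<And>i. i < p \<Longrightarrow> C i \<in> carrier_mat d d" and p: "p \<ge> 1"
    and Q: "Q \<in> carrier_mat d d" and Qi: "Qi \<in> carrier_mat d d"
    and QQi: "Q * Qi = 1\<^sub>m d" and QiQ: "Qi * Q = 1\<^sub>m d"
    and ut: "\<And>i. i < p \<Longrightarrow> upper_triangular (Qi * C i * Q)"
  shows "\<exists>s :: nat \<Rightarrow> real poly.
           (\<forall>j < d. lead_coeff (s j) = 1 \<and> degree (s j) = p) \<and>
           (\<forall>t. det (blk_companion d p C - t \<cdot>\<^sub>m 1\<^sub>m (p*d)) = (-1)^(p*d) * (\<Prod>j<d. poly (s j) t)) \<and>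
           spectrum (map_mat complex_of_real (1\<^sub>m d - matpoly_eval d p C 1))
             = {complex_of_real (poly (s j) 1) | j. j < d}"
proof (intro exI conjI allI impI)
  define T where "T i = Qi * C i * Q" for i
  have T: "T i \<in> carrier_mat d d" if "i < p" for i using C[OF that] Q Qi by (simp add: T_def)
  have CT: "C i = Q * T i * Qi" if "i < p" for i
  proof -
    have "Q * T i * Qi = (Q * Qi) * C i * (Q * Qi)"
      using C[OF that] Q Qi by (simp add: T_def assoc_mult_mat[of _ d d _ d _ d])
    then show ?thesis using C[OF that] by (simp add: QQi)
  qed
  have utT: "upper_triangular (T i)" if "i < p" for i using ut[OF that] by (simp add: T_def)
  show "det (blk_companion d p C - t \<cdot>\<^sub>m 1\<^sub>m (p*d)) = (-1)^(p*d) * (\<Prod>j<d. poly (diag_poly p T j) t)"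
    for t by (rule det_blk_companion_minus_triangularised[OF T utT Q Qi QQi CT p])
  show "spectrum (map_mat complex_of_real (1\<^sub>m d - matpoly_eval d p C 1))
      = {complex_of_real (poly (diag_poly p T j) 1) | j. j < d}"
    by (rule spectrum_one_minus_matpoly_eval_triangularised[OF T utT Q Qi QQi QiQ CT])
  show "lead_coeff (diag_poly p T j) = 1" "degree (diag_poly p T j) = p" for j
    using degree_diag_poly[OF p] by auto
qed

section \<open>Expected iterates\<close>

lemma (in prob_space) mean_mat_blk_companion:
  "mean_mat M (p*d) (p*d) (\<lambda>\<omega>. blk_companion d p (\<lambda>i. C i \<omega>))
   = blk_companion d p (\<lambda>i. mean_mat M d d (C i))"
proof (rule eq_matI)
  fix r c assume "r < dim_row (blk_companion d p (\<lambda>i. mean_mat M d d (C i)))"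
    and "c < dim_col (blk_companion d p (\<lambda>i. mean_mat M d d (C i)))"
  then have r: "r < p*d" and c: "c < p*d" by (auto simp: blk_companion_def)
  have "d > 0" using c by (cases d) auto
  moreover have "r - (p-1)*d < d" if "\<not> r < (p-1)*d" using r that by (cases p) auto
  ultimately show "mean_mat M (p*d) (p*d) (\<lambda>\<omega>. blk_companion d p (\<lambda>i. C i \<omega>)) $$ (r,c)
      = blk_companion d p (\<lambda>i. mean_mat M d d (C i)) $$ (r,c)"
    using r c by (auto simp: mean_mat_def index_blk_companion prob_space)
qed (auto simp: mean_mat_def blk_companion_def)

type_synonym copy_values = "nat option \<times> nat \<times> nat \<Rightarrow> real"

definition copy_C :: "nat \<Rightarrow> copy_values \<Rightarrow> nat \<Rightarrow> real mat" where
  "copy_C d x i = mat d d (\<lambda>(a,b). x (Some i, a, b))"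

definition copy_N :: "nat \<Rightarrow> copy_values \<Rightarrow> real mat" where
  "copy_N d x = mat d d (\<lambda>(a,b). x (None, a, b))"

text \<open>\<open>zproc\<close> as a function of the values of the copies: it exhibits z^k as a measurable function
  of copies 1, ..., k only, which is what makes it independent of copy k+1.\<close>
primrec zproc_of_values :: "nat \<Rightarrow> nat \<Rightarrow> real vec \<Rightarrow> real vec \<Rightarrow> nat \<Rightarrow> (nat \<Rightarrow> copy_values)
    \<Rightarrow> real vec" where
  "zproc_of_values d p b x0 0 f = Ep d p *\<^sub>v x0"
| "zproc_of_values d p b x0 (Suc k) f =
     blk_companion d p (copy_C d (f (Suc k))) *\<^sub>v zproc_of_values d p b x0 k f
     + Ep d p *\<^sub>v (copy_N d (f (Suc k)) *\<^sub>v b)"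

lemma dim_zproc_of_values: "dim_vec (zproc_of_values d p b x0 k f) = p*d"
  by (induction k) (simp_all add: Ep_def blk_companion_def)

lemma zproc_of_values_carrier: "zproc_of_values d p b x0 k f \<in> carrier_vec (p*d)"
  by (rule carrier_vecI[OF dim_zproc_of_values])

lemma zproc_of_values_cong:
  "(\<And>i. i \<in> {1..k} \<Longrightarrow> f i = g i) \<Longrightarrow> zproc_of_values d p b x0 k f = zproc_of_values d p b x0 k g"
  by (induction k) simp_all

lemma index_zproc_of_values_Suc:
  assumes b: "b \<in> carrier_vec d" and r: "r < p*d"
  shows "zproc_of_values d p b x0 (Suc k) f $ r =
    (if r < (p-1)*d then zproc_of_values d p b x0 k f $ (r+d)
     else (\<Sum>c<p*d. f (Suc k) (Some (c div d), r-(p-1)*d, c mod d) * zproc_of_values d p b x0 k f $ c)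
        + (\<Sum>j<d. f (Suc k) (None, r-(p-1)*d, j) * b $ j))"
proof -
  let ?z = "zproc_of_values d p b x0 k f" and ?M = "blk_companion d p (copy_C d (f (Suc k)))"
  have d: "d > 0" using r by (cases d) auto
  have q: "r - (p-1)*d < d" if "\<not> r < (p-1)*d" using r that by (cases p) auto
  have Nb: "copy_N d (f (Suc k)) *\<^sub>v b \<in> carrier_vec d"
    using b by (intro mult_mat_vec_carrier) (auto simp: copy_N_def)
  have "zproc_of_values d p b x0 (Suc k) f $ r = (?M *\<^sub>v ?z) $ r + (Ep d p *\<^sub>v (copy_N d (f (Suc k)) *\<^sub>v b)) $ r"
    using r by (simp add: Ep_def)
  also have "(?M *\<^sub>v ?z) $ r = (\<Sum>c<p*d. ?M $$ (r,c) * ?z $ c)"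
    by (rule index_mult_mat_vec_sum[OF blk_companion_carrier zproc_of_values_carrier r])
  also have "\<dots> = (if r < (p-1)*d then ?z $ (r+d)
      else (\<Sum>c<p*d. f (Suc k) (Some (c div d), r-(p-1)*d, c mod d) * ?z $ c))"
  proof (cases "r < (p-1)*d")
    case True
    then have "r + d < p*d" by (cases p) auto
    moreover have "(\<Sum>c<p*d. ?M $$ (r,c) * ?z $ c) = (\<Sum>c<p*d. if c = r + d then ?z $ c else 0)"
      using True r by (intro sum.cong) (auto simp: index_blk_companion)
    ultimately show ?thesis using True by simp
  next
    case False
    have "(\<Sum>c<p*d. ?M $$ (r,c) * ?z $ c)
        = (\<Sum>c<p*d. f (Suc k) (Some (c div d), r-(p-1)*d, c mod d) * ?z $ c)"
      using False r d q[OF False] by (intro sum.cong refl) (auto simp: index_blk_companion copy_C_def)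
    then show ?thesis using False by simp
  qed
  also have "(Ep d p *\<^sub>v (copy_N d (f (Suc k)) *\<^sub>v b)) $ r
      = (if (p-1)*d \<le> r then (\<Sum>j<d. f (Suc k) (None, r-(p-1)*d, j) * b $ j) else 0)"
    using index_Ep_mult_vec[OF Nb r] index_mult_mat_vec_sum[of "copy_N d (f (Suc k))" d d b] b q
    by (simp add: copy_N_def)
  finally show ?thesis by auto
qed

lemma measurable_component_data_space:
  "j \<in> K \<Longrightarrow> (\<lambda>f. f j x) \<in> borel_measurable (PiM K (\<lambda>_. data_space))"
proof -
  assume "j \<in> K"
  then have "(\<lambda>f. f j) \<in> PiM K (\<lambda>_. data_space) \<rightarrow>\<^sub>M data_space"
    by (rule measurable_component_singleton)
  moreover have "(\<lambda>g. g x) \<in> data_space \<rightarrow>\<^sub>M borel"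
    unfolding data_space_def by (rule measurable_component_singleton) simp
  ultimately show ?thesis by (rule measurable_compose)
qed

lemma measurable_zproc_of_values:
  assumes "{1..k} \<subseteq> K" "r < p*d" "b \<in> carrier_vec d"
  shows "(\<lambda>f. zproc_of_values d p b x0 k f $ r) \<in> borel_measurable (PiM K (\<lambda>_. data_space))"
  using assms
proof (induction k arbitrary: r)
  case (Suc k)
  have K: "{1..k} \<subseteq> K" "Suc k \<in> K" using Suc.prems by auto
  have eq: "(\<lambda>f. zproc_of_values d p b x0 (Suc k) f $ r) = (\<lambda>f.
     if r < (p-1)*d then zproc_of_values d p b x0 k f $ (r+d)
     else (\<Sum>c<p*d. f (Suc k) (Some (c div d), r-(p-1)*d, c mod d) * zproc_of_values d p b x0 k f $ c)
        + (\<Sum>j<d. f (Suc k) (None, r-(p-1)*d, j) * b $ j))"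
    using index_zproc_of_values_Suc[OF Suc.prems(3,2)] by auto
  show ?case
  proof (cases "r < (p-1)*d")
    case True
    then have "r + d < p*d" by (cases p) auto
    then show ?thesis
      unfolding eq using True Suc.IH[OF K(1)] Suc.prems by simp
  next
    case False
    then show ?thesis
      unfolding eq using Suc.prems
      by (simp, intro borel_measurable_add borel_measurable_sum borel_measurable_times
          measurable_component_data_space[OF K(2)] Suc.IH[OF K(1)] borel_measurable_const) auto
  qed
qed simp

lemma shift_recursion_tendsto:
  fixes m :: "nat \<Rightarrow> nat \<Rightarrow> real"
  assumes shift: "\<And>k r. r < (p-1)*d \<Longrightarrow> m (Suc k) r = m k (r+d)"
    and lim: "\<And>a. a < d \<Longrightarrow> (\<lambda>k. m k ((p-1)*d + a)) \<longlonglongrightarrow> L a"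
    and c: "c < p*d"
  shows "(\<lambda>k. m k c) \<longlonglongrightarrow> L (c mod d)"
proof -
  have below: "(\<lambda>k. m k ((p-1-j)*d + b)) \<longlonglongrightarrow> L b" if b: "b < d" and j: "j \<le> p-1" for j b
    using j
  proof (induction j)
    case 0
    then show ?case using lim[OF b] by simp
  next
    case (Suc j)
    define u where "u = p-1-Suc j"
    have u: "Suc u = p-1-j" using Suc.prems by (simp add: u_def)
    have "u*d + b < Suc u * d" using b by simp
    also have "\<dots> \<le> (p-1)*d" using u by (intro mult_le_mono1) auto
    finally have "m (Suc k) (u*d + b) = m k ((p-1-j)*d + b)" for k
      using shift u[symmetric] by (simp add: add.commute add.left_commute)
    then have "(\<lambda>k. m (Suc k) (u*d + b)) \<longlonglongrightarrow> L b" using Suc by simp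
    then show ?case unfolding u_def by (rule LIMSEQ_imp_Suc)
  qed
  have "c div d < p" and "d > 0" using c by (auto simp: less_mult_imp_div_less intro: Nat.gr0I)
  then have "(\<lambda>k. m k ((p-1-(p-1-c div d))*d + c mod d)) \<longlonglongrightarrow> L (c mod d)"
    by (intro below) auto
  moreover have "(p-1-(p-1-c div d))*d + c mod d = c"
    using \<open>c div d < p\<close> by (simp add: div_mult_mod_eq)
  ultimately show ?thesis by simp
qed

lemma shift_recursion_limit:
  fixes m :: "nat \<Rightarrow> nat \<Rightarrow> real"
  assumes shift: "\<And>k r. r < (p-1)*d \<Longrightarrow> m (Suc k) r = m k (r+d)"
    and last: "\<And>k a. a < d \<Longrightarrow> m (Suc k) ((p-1)*d + a) = (\<Sum>c<p*d. G a c * m k c) + h a"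
    and lim: "\<And>a. a < d \<Longrightarrow> (\<lambda>k. m k ((p-1)*d + a)) \<longlonglongrightarrow> L a"
    and a: "a < d"
  shows "L a = (\<Sum>c<p*d. G a c * L (c mod d)) + h a"
proof -
  have "(\<lambda>k. m (Suc k) ((p-1)*d + a)) \<longlonglongrightarrow> (\<Sum>c<p*d. G a c * L (c mod d)) + h a"
    unfolding last[OF a] by (intro tendsto_intros shift_recursion_tendsto[OF shift lim]) auto
  moreover have "(\<lambda>k. m (Suc k) ((p-1)*d + a)) \<longlonglongrightarrow> L a"
    using lim[OF a] by (rule LIMSEQ_Suc)
  ultimately show ?thesis using LIMSEQ_unique by blast
qed

lemma sym_pos_def_mat_inverse:
  assumes "sym_pos_def d A"
  shows "A \<in> carrier_mat d d" and "the (mat_inverse A) \<in> carrier_mat d d"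
    and "the (mat_inverse A) * A = 1\<^sub>m d"
proof -
  have A: "A \<in> carrier_mat d d" and pos: "\<And>v. v \<in> carrier_vec d \<Longrightarrow> v \<noteq> 0\<^sub>v d \<Longrightarrow> v \<bullet> (A *\<^sub>v v) > 0"
    using assms unfolding sym_pos_def_def by auto
  have det: "det A \<noteq> 0"
  proof
    assume "det A = 0"
    then obtain v where "v \<in> carrier_vec d" "v \<noteq> 0\<^sub>v d" "A *\<^sub>v v = 0\<^sub>v d"
      using det_0_iff_vec_prod_zero[OF A] by auto
    with pos show False by fastforce
  qed
  then obtain Ai where "mat_inverse A = Some Ai"
    using mat_inverse(1)[OF A, where b = "()"] det_non_zero_imp_unit[OF A det, where b = "()"]
    by (cases "mat_inverse A") auto
  then show "A \<in> carrier_mat d d" "the (mat_inverse A) \<in> carrier_mat d d"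
    "the (mat_inverse A) * A = 1\<^sub>m d"
    using mat_inverse(2)[OF A] A by auto
qed

lemma blk_companion_cong:
  "(\<And>i. i < p \<Longrightarrow> C i = C' i) \<Longrightarrow> blk_companion d p C = blk_companion d p C'"
  unfolding blk_companion_def by (intro cong_mat refl) (auto simp: less_mult_imp_div_less)

locale iid_blk_companion_copies = prob_space P
  for P :: "'w measure" +
  fixes d p :: nat and Cr :: "nat \<Rightarrow> nat \<Rightarrow> 'w \<Rightarrow> real mat" and Nr :: "nat \<Rightarrow> 'w \<Rightarrow> real mat"
  assumes Cr_carrier: "\<And>k i \<omega>. Cr k i \<omega> \<in> carrier_mat d d"
    and Nr_carrier: "\<And>k \<omega>. Nr k \<omega> \<in> carrier_mat d d"
    and integrable_Cr: "\<And>k i a b. i < p \<Longrightarrow> a < d \<Longrightarrow> b < d \<Longrightarrow> integrable P (\<lambda>\<omega>. Cr k i \<omega> $$ (a,b))"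
    and integrable_Nr: "\<And>k a b. a < d \<Longrightarrow> b < d \<Longrightarrow> integrable P (\<lambda>\<omega>. Nr k \<omega> $$ (a,b))"
    and measurable_copy: "\<And>k. copy_data d p (Cr k) (Nr k) \<in> measurable P data_space"
    and indep_copies: "indep_vars (\<lambda>_. data_space) (\<lambda>k. copy_data d p (Cr k) (Nr k)) {1..}"
    and distr_copy: "\<And>k. k \<ge> 1 \<Longrightarrow> distr P data_space (copy_data d p (Cr k) (Nr k))
                                     = distr P data_space (copy_data d p (Cr 0) (Nr 0))"
begin

abbreviation copy :: "nat \<Rightarrow> 'w \<Rightarrow> copy_values" where
  "copy k \<equiv> copy_data d p (Cr k) (Nr k)"

abbreviation z :: "real vec \<Rightarrow> real vec \<Rightarrow> nat \<Rightarrow> 'w \<Rightarrow> real vec" where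
  "z b x0 \<equiv> zproc d p Cr Nr b x0"

lemma copy_Some: "i < p \<Longrightarrow> a < d \<Longrightarrow> c < d \<Longrightarrow> copy k \<omega> (Some i, a, c) = Cr k i \<omega> $$ (a,c)"
  by (simp add: copy_data_def)

lemma copy_None: "a < d \<Longrightarrow> c < d \<Longrightarrow> copy k \<omega> (None, a, c) = Nr k \<omega> $$ (a,c)"
  by (simp add: copy_data_def)

lemma zproc_eq_zproc_of_values: "z b x0 k \<omega> = zproc_of_values d p b x0 k (\<lambda>i. copy i \<omega>)"
proof (induction k)
  case (Suc k)
  have "copy_C d (copy (Suc k) \<omega>) i = Cr (Suc k) i \<omega>" if "i < p" for i
    using Cr_carrier[of "Suc k" i \<omega>] that by (intro eq_matI) (auto simp: copy_C_def copy_Some)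
  then have "blk_companion d p (copy_C d (copy (Suc k) \<omega>)) = blk_companion d p (\<lambda>i. Cr (Suc k) i \<omega>)"
    by (rule blk_companion_cong)
  moreover have "copy_N d (copy (Suc k) \<omega>) = Nr (Suc k) \<omega>"
    using Nr_carrier[of "Suc k" \<omega>] by (intro eq_matI) (auto simp: copy_N_def copy_None)
  ultimately show ?case using Suc by simp
qed simp

lemma index_zproc_Suc:
  assumes "b \<in> carrier_vec d" "r < p*d"
  shows "z b x0 (Suc k) \<omega> $ r =
    (if r < (p-1)*d then z b x0 k \<omega> $ (r+d)
     else (\<Sum>c<p*d. copy (Suc k) \<omega> (Some (c div d), r-(p-1)*d, c mod d) * z b x0 k \<omega> $ c)
        + (\<Sum>j<d. copy (Suc k) \<omega> (None, r-(p-1)*d, j) * b $ j))"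
  unfolding zproc_eq_zproc_of_values by (rule index_zproc_of_values_Suc[OF assms])

lemma integrable_copy_entry: "integrable P (\<lambda>\<omega>. copy k \<omega> x)"
proof -
  obtain oi a c where x: "x = (oi, a, c)" by (cases x)
  show ?thesis
  proof (cases "a < d \<and> c < d")
    case True
    then show ?thesis
      unfolding x copy_data_def by (cases oi; cases "the oi < p") (auto simp: integrable_Cr integrable_Nr)
  next
    case False
    then have "(\<lambda>\<omega>. copy k \<omega> x) = (\<lambda>\<omega>. 0)" unfolding x copy_data_def by auto
    then show ?thesis by simp
  qed
qed

lemma integral_copy_entry: "k \<ge> 1 \<Longrightarrow> (LINT \<omega>|P. copy k \<omega> x) = (LINT \<omega>|P. copy 0 \<omega> x)"
proof -
  assume k: "k \<ge> 1"
  have x: "(\<lambda>g. g x) \<in> borel_measurable data_space"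
    unfolding data_space_def by (rule measurable_component_singleton) simp
  have "(LINT \<omega>|P. copy k \<omega> x) = integral\<^sup>L (distr P data_space (copy k)) (\<lambda>g. g x)"
    using measurable_copy[of k] x by (simp add: integral_distr)
  also have "\<dots> = integral\<^sup>L (distr P data_space (copy 0)) (\<lambda>g. g x)"
    by (simp add: distr_copy[OF k])
  also have "\<dots> = (LINT \<omega>|P. copy 0 \<omega> x)"
    using measurable_copy[of 0] x by (simp add: integral_distr)
  finally show ?thesis .
qed

lemma indep_copy_zproc:
  assumes b: "b \<in> carrier_vec d" and c: "c < p*d"
  shows "indep_var borel (\<lambda>\<omega>. copy (Suc k) \<omega> x) borel (\<lambda>\<omega>. z b x0 k \<omega> $ c)"
proof -
  let ?R = "\<lambda>I \<omega>. restrict (\<lambda>i. copy i \<omega>) I"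
  have "indep_var (PiM {Suc k} (\<lambda>_. data_space)) (?R {Suc k}) (PiM {1..k} (\<lambda>_. data_space)) (?R {1..k})"
    by (rule indep_var_restrict[OF indep_copies]) auto
  then have "indep_var borel ((\<lambda>h. h (Suc k) x) \<circ> ?R {Suc k})
      borel ((\<lambda>g. zproc_of_values d p b x0 k g $ c) \<circ> ?R {1..k})"
    by (rule indep_var_compose[OF _ measurable_component_data_space measurable_zproc_of_values])
      (use b c in auto)
  moreover have "zproc_of_values d p b x0 k (?R {1..k} \<omega>) = z b x0 k \<omega>" for \<omega>
    unfolding zproc_eq_zproc_of_values by (rule zproc_of_values_cong) simp
  ultimately show ?thesis by (simp add: comp_def)
qed

lemma integrable_zproc:
  assumes b: "b \<in> carrier_vec d"
  shows "r < p*d \<Longrightarrow> integrable P (\<lambda>\<omega>. z b x0 k \<omega> $ r)"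
proof (induction k arbitrary: r)
  case (Suc k)
  show ?case
  proof (cases "r < (p-1)*d")
    case True
    then have "r + d < p*d" by (cases p) auto
    then show ?thesis using Suc.IH True by (simp add: index_zproc_Suc[OF b Suc.prems] del: zproc.simps)
  next
    case False
    have "integrable P (\<lambda>\<omega>. copy (Suc k) \<omega> x * z b x0 k \<omega> $ c)" if "c < p*d" for x c
      using that b by (intro indep_var_integrable indep_copy_zproc integrable_copy_entry Suc.IH)
    then show ?thesis
      using False
      by (simp add: index_zproc_Suc[OF b Suc.prems] del: zproc.simps,
          intro Bochner_Integration.integrable_add Bochner_Integration.integrable_sum)
        (auto simp: integrable_copy_entry)
  qed
qed simp

lemma mean_zproc_shift:
  assumes "b \<in> carrier_vec d" "r < (p-1)*d"
  shows "(LINT \<omega>|P. z b x0 (Suc k) \<omega> $ r) = (LINT \<omega>|P. z b x0 k \<omega> $ (r+d))"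
proof -
  have "r < p*d" using assms(2) by (cases p) auto
  then show ?thesis using assms by (simp add: index_zproc_Suc del: zproc.simps)
qed

lemma mean_copy_C:
  "k \<ge> 1 \<Longrightarrow> i < p \<Longrightarrow> a < d \<Longrightarrow> c < d
   \<Longrightarrow> (LINT \<omega>|P. copy k \<omega> (Some i, a, c)) = mean_mat P d d (Cr 0 i) $$ (a,c)"
  by (subst integral_copy_entry) (simp_all add: mean_mat_def copy_Some)

lemma mean_copy_N:
  "k \<ge> 1 \<Longrightarrow> a < d \<Longrightarrow> c < d
   \<Longrightarrow> (LINT \<omega>|P. copy k \<omega> (None, a, c)) = mean_mat P d d (Nr 0) $$ (a,c)"
  by (subst integral_copy_entry) (simp_all add: mean_mat_def copy_None)

lemma mean_zproc_last:
  assumes b: "b \<in> carrier_vec d" and a: "a < d" and p: "p \<ge> 1"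
  shows "(LINT \<omega>|P. z b x0 (Suc k) \<omega> $ ((p-1)*d + a))
       = (\<Sum>c<p*d. mean_mat P d d (Cr 0 (c div d)) $$ (a, c mod d) * (LINT \<omega>|P. z b x0 k \<omega> $ c))
         + (mean_mat P d d (Nr 0) *\<^sub>v b) $ a"
proof -
  have r: "(p-1)*d + a < p*d" using a p by (cases p) auto
  have indep_mean: "(LINT \<omega>|P. copy (Suc k) \<omega> x * z b x0 k \<omega> $ c)
      = (LINT \<omega>|P. copy (Suc k) \<omega> x) * (LINT \<omega>|P. z b x0 k \<omega> $ c)" if "c < p*d" for x c
    using that b by (intro indep_var_lebesgue_integral indep_copy_zproc integrable_copy_entry integrable_zproc)
  have int: "integrable P (\<lambda>\<omega>. copy (Suc k) \<omega> x * z b x0 k \<omega> $ c)" if "c < p*d" for x c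
    using that b by (intro indep_var_integrable indep_copy_zproc integrable_copy_entry integrable_zproc)
  have "(\<lambda>\<omega>. z b x0 (Suc k) \<omega> $ ((p-1)*d + a))
      = (\<lambda>\<omega>. (\<Sum>c<p*d. copy (Suc k) \<omega> (Some (c div d), a, c mod d) * z b x0 k \<omega> $ c)
        + (\<Sum>j<d. copy (Suc k) \<omega> (None, a, j) * b $ j))"
    using index_zproc_Suc[OF b r] by simp
  then have "(LINT \<omega>|P. z b x0 (Suc k) \<omega> $ ((p-1)*d + a))
      = (LINT \<omega>|P. (\<Sum>c<p*d. copy (Suc k) \<omega> (Some (c div d), a, c mod d) * z b x0 k \<omega> $ c))
        + (LINT \<omega>|P. (\<Sum>j<d. copy (Suc k) \<omega> (None, a, j) * b $ j))"
    using int integrable_copy_entry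
    by (simp only:, intro Bochner_Integration.integral_add Bochner_Integration.integrable_sum) auto
  also have "\<dots> = (\<Sum>c<p*d. (LINT \<omega>|P. copy (Suc k) \<omega> (Some (c div d), a, c mod d) * z b x0 k \<omega> $ c))
        + (\<Sum>j<d. (LINT \<omega>|P. copy (Suc k) \<omega> (None, a, j)) * b $ j)"
    using int integrable_copy_entry by (simp add: Bochner_Integration.integral_sum)
  also have "\<dots> = (\<Sum>c<p*d. mean_mat P d d (Cr 0 (c div d)) $$ (a, c mod d) * (LINT \<omega>|P. z b x0 k \<omega> $ c))
        + (\<Sum>j<d. mean_mat P d d (Nr 0) $$ (a, j) * b $ j)"
    using a by (simp add: indep_mean mean_copy_C mean_copy_N less_mult_imp_div_less)
  also have "(\<Sum>j<d. mean_mat P d d (Nr 0) $$ (a, j) * b $ j) = (mean_mat P d d (Nr 0) *\<^sub>v b) $ a"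
    using index_mult_mat_vec_sum[OF _ b a, of "mean_mat P d d (Nr 0)"] by (simp add: mean_mat_def)
  finally show ?thesis .
qed

lemma neg_mean_N_mult_eq:
  fixes A Ai :: "real mat"
  assumes p: "p \<ge> 1" and A: "A \<in> carrier_mat d d" and Ai: "Ai \<in> carrier_mat d d" "Ai * A = 1\<^sub>m d"
    and lim: "\<And>b j. b \<in> carrier_vec d \<Longrightarrow> j < d \<Longrightarrow>
      (\<lambda>k. LINT \<omega>|P. (transpose_mat (Ep d p) *\<^sub>v z b (0\<^sub>v d) k \<omega>) $ j) \<longlonglongrightarrow> (- (Ai *\<^sub>v b)) $ j"
  shows "- (mean_mat P d d (Nr 0) * A) = 1\<^sub>m d - matpoly_eval d p (\<lambda>i. mean_mat P d d (Cr 0 i)) 1"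
proof (rule mat_eq_if_mult_vec_eq)
  let ?C = "\<lambda>i. mean_mat P d d (Cr 0 i)" and ?N = "mean_mat P d d (Nr 0)"
  have C: "?C i \<in> carrier_mat d d" for i by (simp add: mean_mat_def)
  have N: "?N \<in> carrier_mat d d" by (simp add: mean_mat_def)
  have S: "matpoly_eval d p ?C 1 \<in> carrier_mat d d" by (rule matpoly_eval_carrier[OF C])
  show "- (?N * A) \<in> carrier_mat d d" "1\<^sub>m d - matpoly_eval d p ?C 1 \<in> carrier_mat d d"
    using N A S by auto
  fix v :: "real vec" assume v: "v \<in> carrier_vec d"
  define b where "b = A *\<^sub>v v"
  have b: "b \<in> carrier_vec d" using A v by (simp add: b_def)
  have "Ai *\<^sub>v b = v" using A Ai v by (simp add: b_def flip: assoc_mult_mat_vec)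
  then have lim_last: "(\<lambda>k. LINT \<omega>|P. z b (0\<^sub>v d) k \<omega> $ ((p-1)*d + a)) \<longlonglongrightarrow> (- v) $ a"
    if "a < d" for a
    using lim[OF b that] that p zproc_eq_zproc_of_values zproc_of_values_carrier
    by (simp add: index_transpose_Ep_mult_vec)
  have fixpoint: "(- v) $ a = (\<Sum>c<p*d. ?C (c div d) $$ (a, c mod d) * (- v) $ (c mod d)) + (?N *\<^sub>v b) $ a"
    if "a < d" for a
    by (rule shift_recursion_limit[where m = "\<lambda>k r. LINT \<omega>|P. z b (0\<^sub>v d) k \<omega> $ r"])
      (use mean_zproc_shift[OF b] mean_zproc_last[OF b _ p] lim_last that in auto)
  have last_row: "(- v) $ a = (matpoly_eval d p ?C 1 *\<^sub>v (- v)) $ a + (?N *\<^sub>v b) $ a" if "a < d" for a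
    using fixpoint[OF that] sum_blk_row_eq_matpoly_eval_one_mult_vec[OF C _ that, of "- v"] v by simp
  have "(- (?N * A) *\<^sub>v v) $ a = ((1\<^sub>m d - matpoly_eval d p ?C 1) *\<^sub>v v) $ a" if "a < d" for a
    using last_row[OF that] that N A S v by (simp add: b_def minus_mult_distrib_mat_vec[of _ d d])
  then show "- (?N * A) *\<^sub>v v = (1\<^sub>m d - matpoly_eval d p ?C 1) *\<^sub>v v"
    using N A S by (intro eq_vecI) auto
qed

end

theorem corollary3p5:
  fixes P :: "'w measure" and d p :: nat and A :: "real mat"
    and Cr :: "nat \<Rightarrow> nat \<Rightarrow> 'w \<Rightarrow> real mat" and Nr :: "nat \<Rightarrow> 'w \<Rightarrow> real mat"
  assumes "prob_space P"
    and "sym_pos_def d A"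
    and "p \<ge> 1"
    and "\<And>k i \<omega>. Cr k i \<omega> \<in> carrier_mat d d"
    and "\<And>k \<omega>. Nr k \<omega> \<in> carrier_mat d d"
    and "\<And>k i a b. i < p \<Longrightarrow> a < d \<Longrightarrow> b < d \<Longrightarrow>
           integrable P (\<lambda>\<omega>. Cr k i \<omega> $$ (a,b))"
    and "\<And>k a b. a < d \<Longrightarrow> b < d \<Longrightarrow> integrable P (\<lambda>\<omega>. Nr k \<omega> $$ (a,b))"
    and "\<And>k. copy_data d p (Cr k) (Nr k) \<in> measurable P data_space"
    and "prob_space.indep_vars P (\<lambda>_. data_space) (\<lambda>k. copy_data d p (Cr k) (Nr k)) {1..}"
    and "\<And>k. k \<ge> 1 \<Longrightarrow> distr P data_space (copy_data d p (Cr k) (Nr k))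
                        = distr P data_space (copy_data d p (Cr 0) (Nr 0))"
    and "spectral_radius (map_mat complex_of_real
           (mean_mat P (p*d) (p*d) (\<lambda>\<omega>. blk_companion d p (\<lambda>i. Cr 0 i \<omega>)))) < 1"
    and "\<forall>b \<in> carrier_vec d. \<forall>x0 \<in> carrier_vec d. \<forall>j < d.
           (\<lambda>k. LINT \<omega>|P. (transpose_mat (Ep d p) *\<^sub>v zproc d p Cr Nr b x0 k \<omega>) $ j)
             \<longlonglongrightarrow> (- (the (mat_inverse A) *\<^sub>v b)) $ j"
    and "\<exists>Q Qi. Q \<in> carrier_mat d d \<and> Qi \<in> carrier_mat d d \<and> Q * Qi = 1\<^sub>m d \<and> Qi * Q = 1\<^sub>m d \<and>
           (\<forall>i < p. upper_triangular (Qi * mean_mat P d d (Cr 0 i) * Q))"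
  shows "\<exists>s :: nat \<Rightarrow> real poly.
           (\<forall>j < d. lead_coeff (s j) = 1 \<and> degree (s j) = p) \<and>
           (\<forall>t::real. det (mean_mat P (p*d) (p*d) (\<lambda>\<omega>. blk_companion d p (\<lambda>i. Cr 0 i \<omega>))
                              - t \<cdot>\<^sub>m 1\<^sub>m (p*d))
                     = (-1)^(p*d) * (\<Prod>j<d. poly (s j) t)) \<and>
           spectrum (map_mat complex_of_real (- (mean_mat P d d (Nr 0) * A)))
             = {complex_of_real (poly (s j) 1) | j. j < d}"
proof -
  interpret iid_blk_companion_copies P d p Cr Nr
    by (intro iid_blk_companion_copies.intro iid_blk_companion_copies_axioms.intro)
      (fact assms(1,4-10))+
  obtain Q Qi where Q: "Q \<in> carrier_mat d d" "Qi \<in> carrier_mat d d" "Q * Qi = 1\<^sub>m d" "Qi * Q = 1\<^sub>m d"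
    and ut: "\<And>i. i < p \<Longrightarrow> upper_triangular (Qi * mean_mat P d d (Cr 0 i) * Q)"
    using assms(13) by blast
  have "- (mean_mat P d d (Nr 0) * A) = 1\<^sub>m d - matpoly_eval d p (\<lambda>i. mean_mat P d d (Cr 0 i)) 1"
    using assms(12) sym_pos_def_mat_inverse[OF assms(2)]
    by (intro neg_mean_N_mult_eq[OF assms(3)]) auto
  moreover have "\<exists>s :: nat \<Rightarrow> real poly.
      (\<forall>j < d. lead_coeff (s j) = 1 \<and> degree (s j) = p) \<and>
      (\<forall>t. det (blk_companion d p (\<lambda>i. mean_mat P d d (Cr 0 i)) - t \<cdot>\<^sub>m 1\<^sub>m (p*d))
           = (-1)^(p*d) * (\<Prod>j<d. poly (s j) t)) \<and>
      spectrum (map_mat complex_of_real (1\<^sub>m d - matpoly_eval d p (\<lambda>i. mean_mat P d d (Cr 0 i)) 1))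
        = {complex_of_real (poly (s j) 1) | j. j < d}"
    by (rule blk_companion_triangularisable[OF _ assms(3) Q ut]) (simp add: mean_mat_def)
  ultimately show ?thesis by (simp add: mean_mat_blk_companion)
qed

end
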